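(* The set $X^{\mathcal B}=\{x^{\mathbf b}:\mathbf b\in\mathcal B\}$ is a basis of the $\mathbb C(\lambda)$-vector space $\mathcal W'$.
   Context: Let $A=\{\mathbf a_1,\dots,\mathbf a_m\}\subseteq\mathbb Z^n$ be linearly independent over $\mathbb R$, $\mathbf a_0\in\mathbb Z^n$, and $\ell_0,\dots,\ell_m$ positive integers with gcd $1$, $\ell_0\mathbf a_0=\sum_{j=1}^m\ell_j\mathbf a_j$, $\ell_0=\sum_{j=1}^m\ell_j$. Let $f_\lambda=\sum_{j=1}^m\ell_jx^{\mathbf a_j}-\ell_0\lambda x^{\mathbf a_0}$. Let $V$ be the real span of $A$, $V_{\mathbb Z}=V\cap\mathbb Z^n$, $C(A)$ the real cone generated by $A$, $M=V_{\mathbb Z}\cap C(A)$. Let $S'$ be the $\mathbb C(\lambda)$-span of $\{x^u:u\in M\}$ in $\mathbb C(\lambda)[x_1^{\pm1},\dots,x_n^{\pm1}]$, $D_i=x_i\partial/\partial x_i+x_i\partial f_\lambda/\partial x_i$ ($i=1,\dots,n$) acting on $S'$, and $\mathcal W'=S'/\sum_{i=1}^nD_iS'$. Let $P(A)=\{\sum_jc_j\mathbf a_j:0\le c_j<1\}$ and $\mathcal B=V_{\mathbb Z}\cap P(A)$. *)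

theory Defs
  imports "HOL-Computational_Algebra.Polynomial" "HOL-Computational_Algebra.Fraction_Field"
begin

type_synonym ratfun = "complex poly fract"

definition lam :: ratfun where
  "lam = Fract [:0, 1:] 1"

text \<open>Laurent polynomials in variables x_i (i :: 'n) with coefficients in C(lambda):
  coefficient functions on exponent vectors ('n \<Rightarrow> int) with finite support.\<close>
type_synonym 'n laurent = "('n \<Rightarrow> int) \<Rightarrow> ratfun"

definition lsupp :: "'n laurent \<Rightarrow> ('n \<Rightarrow> int) set" where
  "lsupp p = {u. p u \<noteq> 0}"

definition is_laurent :: "'n laurent \<Rightarrow> bool" where
  "is_laurent p \<longleftrightarrow> finite (lsupp p)"

definition xmon :: "('n \<Rightarrow> int) \<Rightarrow> 'n laurent" where
  "xmon u = (\<lambda>v. if v = u then 1 else 0)"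

definition lmult :: "'n laurent \<Rightarrow> 'n laurent \<Rightarrow> 'n laurent" where
  "lmult p q = (\<lambda>v. \<Sum>u\<in>lsupp p. p u * q (\<lambda>i. v i - u i))"

text \<open>The Euler operator x_i d/dx_i.\<close>
definition theta :: "'n \<Rightarrow> 'n laurent \<Rightarrow> 'n laurent" where
  "theta i p = (\<lambda>v. of_int (v i) * p v)"

definition flam :: "nat \<Rightarrow> (nat \<Rightarrow> 'n \<Rightarrow> int) \<Rightarrow> (nat \<Rightarrow> nat) \<Rightarrow> 'n laurent" where
  "flam m a l = (\<lambda>v. (\<Sum>j\<in>{1..m}. of_nat (l j) * xmon (a j) v)
                     - of_nat (l 0) * lam * xmon (a 0) v)"

text \<open>D_i = x_i d/dx_i + x_i (d f_lambda / d x_i).\<close>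
definition Dop :: "nat \<Rightarrow> (nat \<Rightarrow> 'n \<Rightarrow> int) \<Rightarrow> (nat \<Rightarrow> nat) \<Rightarrow> 'n \<Rightarrow> 'n laurent \<Rightarrow> 'n laurent" where
  "Dop m a l i g = (\<lambda>v. theta i g v + lmult (theta i (flam m a l)) g v)"

definition Mset :: "nat \<Rightarrow> (nat \<Rightarrow> 'n \<Rightarrow> int) \<Rightarrow> ('n \<Rightarrow> int) set" where
  "Mset m a = {u. \<exists>c::nat \<Rightarrow> real. (\<forall>j\<in>{1..m}. 0 \<le> c j) \<and>
                   (\<forall>i. real_of_int (u i) = (\<Sum>j\<in>{1..m}. c j * real_of_int (a j i)))}"

definition Bset :: "nat \<Rightarrow> (nat \<Rightarrow> 'n \<Rightarrow> int) \<Rightarrow> ('n \<Rightarrow> int) set" where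
  "Bset m a = {u. \<exists>c::nat \<Rightarrow> real. (\<forall>j\<in>{1..m}. 0 \<le> c j \<and> c j < 1) \<and>
                   (\<forall>i. real_of_int (u i) = (\<Sum>j\<in>{1..m}. c j * real_of_int (a j i)))}"

definition Sprime :: "nat \<Rightarrow> (nat \<Rightarrow> 'n \<Rightarrow> int) \<Rightarrow> 'n laurent set" where
  "Sprime m a = {g. is_laurent g \<and> lsupp g \<subseteq> Mset m a}"

definition Dimage :: "nat \<Rightarrow> (nat \<Rightarrow> 'n \<Rightarrow> int) \<Rightarrow> (nat \<Rightarrow> nat) \<Rightarrow> 'n laurent set" where
  "Dimage m a l = {h. \<exists>g::'n \<Rightarrow> 'n laurent. (\<forall>i. g i \<in> Sprime m a) \<and>
                       h = (\<lambda>v. \<Sum>i\<in>UNIV. Dop m a l i (g i) v)}"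

definition lincomb :: "('n \<Rightarrow> int) set \<Rightarrow> (('n \<Rightarrow> int) \<Rightarrow> ratfun) \<Rightarrow> 'n laurent" where
  "lincomb B c = (\<lambda>v. \<Sum>b\<in>B. c b * xmon b v)"

text \<open>X^B is a basis of W' = S' / Dimage: the family of classes of x^b (b \<in> B) is
  linearly independent and spanning in the quotient, i.e. (unfolded) ...\<close>
definition is_quotient_basis :: "'n laurent set \<Rightarrow> 'n laurent set \<Rightarrow> ('n \<Rightarrow> int) set \<Rightarrow> bool" where
  "is_quotient_basis S R B \<longleftrightarrow>
     finite B \<and> (\<forall>b\<in>B. xmon b \<in> S) \<and>
     (\<forall>c. lincomb B c \<in> R \<longrightarrow> (\<forall>b\<in>B. c b = 0)) \<and>
     (\<forall>g\<in>S. \<exists>c. (\<lambda>v. g v - lincomb B c v) \<in> R)"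

end

theory Submission
  imports
    Defs
    "HOL-Analysis.Cartesian_Space"
    "HOL-Computational_Algebra.Formal_Laurent_Series"
    "HOL-Computational_Algebra.Polynomial_FPS"
    "HOL-Library.Function_Algebras"
begin

(* Write c_1(u), ..., c_m(u) for the coordinates of u in V with respect to a_1, ..., a_m; then
   M and B are cut out by c_k >= 0, resp. 0 <= c_k < 1, and c_k(a_0) = l_k / l_0.

   Spanning: for the dual vector phi of a_k, sum_i phi_i D_i x^u is
   c_k(u) x^u + l_k x^(u + a_k) - l_k lam x^(u + a_0).  By induction on the weight
   c_1 + ... + c_m, monomials of smaller weight are congruent to combinations of X^B modulo
   sum_i D_i S', hence x^(u + a_k) == lam x^(u + a_0).  Trading the integer parts of the
   coordinates of p for multiples of a_0 gives x^p == lam^s x^p', where p' has the same weight;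
   iterating on the finitely many points of M of that weight runs into a cycle, which yields
   (1 - lam^S) x^q == 0 with S > 0, unless q lies in B.

   Independence: for b in B let G_b(u) vanish unless u - b lies in Z a_1 + ... + Z a_m, with
   G_b(b) = 1 and G_b(u + a_k) = -(c_k(u) / l_k) G_b(u).  The power series
   Psi_b(u) = sum_t (-l_0 lam)^t / t! G_b(u + t a_0) satisfy the recurrences of the D_i, so
   x^u |-> Psi_b(u), extended C(lam)-linearly through C(lam) -> C((lam)), kills sum_i D_i S',
   and Psi_b(b') has constant term [b' = b].  Comparing the coefficients of lowest order in
   lam of a relation sum_b c_b x^b == 0 then forces every c_b to vanish. *)

section \<open>Dual vectors and periodic orbits\<close>

lemma inj_on_if_independent:
  fixes v :: "'j \<Rightarrow> 'a::real_vector"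
  assumes indep: "\<And>c. (\<Sum>j\<in>J. c j *\<^sub>R v j) = 0 \<Longrightarrow> \<forall>j\<in>J. c j = 0" and "finite J"
  shows "inj_on v J"
proof (rule inj_onI, rule ccontr)
  fix i j assume ij: "i \<in> J" "j \<in> J" "v i = v j" "i \<noteq> j"
  define c where "c t = (if t = i then 1 else 0) - (if t = j then 1 else (0::real))" for t
  have "(\<Sum>t\<in>J. c t *\<^sub>R v t) = v i - v j"
    using ij \<open>finite J\<close>
    by (simp add: c_def scaleR_left_diff_distrib sum_subtractf if_distrib[of "\<lambda>r. r *\<^sub>R _"]
        cong: if_cong)
  then have "c i = 0" using indep[of c] ij by simp
  then show False using ij by (simp add: c_def)
qed

lemma dual_vector_exists:
  fixes v :: "'j \<Rightarrow> 'a::euclidean_space"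
  assumes "finite J" and "k \<in> J"
    and indep: "\<And>c. (\<Sum>j\<in>J. c j *\<^sub>R v j) = 0 \<Longrightarrow> \<forall>j\<in>J. c j = 0"
  shows "\<exists>z. \<forall>j\<in>J. z \<bullet> v j = (if j = k then 1 else 0)"
proof -
  define S where "S = v ` (J - {k})"
  obtain y z where y: "y \<in> span S" and z: "\<And>w. w \<in> span S \<Longrightarrow> orthogonal z w" and "v k = y + z"
    using orthogonal_subspace_decomp_exists by blast
  have "z \<noteq> 0"
  proof
    assume "z = 0"
    then obtain c where c: "v k = (\<Sum>w\<in>S. c w *\<^sub>R w)"
      using y \<open>v k = y + z\<close> span_finite[of S] \<open>finite J\<close> by (auto simp: S_def)
    have "inj_on v (J - {k})"
      using inj_on_if_independent[OF indep \<open>finite J\<close>] by (rule inj_on_subset) auto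
    then have "v k = (\<Sum>j\<in>J - {k}. c (v j) *\<^sub>R v j)"
      by (simp add: c S_def sum.reindex)
    moreover have "(\<Sum>j\<in>J. (if j = k then -1 else c (v j)) *\<^sub>R v j)
        = - v k + (\<Sum>j\<in>J - {k}. c (v j) *\<^sub>R v j)"
      using \<open>finite J\<close> \<open>k \<in> J\<close> by (simp add: sum.remove)
    ultimately have "(\<Sum>j\<in>J. (if j = k then -1 else c (v j)) *\<^sub>R v j) = 0"
      by simp
    then show False using indep \<open>k \<in> J\<close> by fastforce
  qed
  have "z \<bullet> v j = 0" if "j \<in> J" "j \<noteq> k" for j
    using z[of "v j"] that by (auto simp: S_def orthogonal_def intro: span_base)
  moreover have "z \<bullet> v k = z \<bullet> z"
    using z[OF y] \<open>v k = y + z\<close> by (simp add: orthogonal_def inner_add_right)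
  ultimately have "\<forall>j\<in>J. (z /\<^sub>R (z \<bullet> z)) \<bullet> v j = (if j = k then 1 else 0)"
    using \<open>z \<noteq> 0\<close> by auto
  then show ?thesis ..
qed

lemma funpow_repeats_in_finite_set:
  assumes "finite A" and "f ` A \<subseteq> A" and "p \<in> A"
  obtains i j where "i < j" and "(f ^^ i) p = (f ^^ j) p"
proof -
  have "(f ^^ t) p \<in> A" for t
    by (induction t) (use assms in auto)
  then have "(\<lambda>t. (f ^^ t) p) ` {0..card A} \<subseteq> A" by auto
  then have "\<not> inj_on (\<lambda>t. (f ^^ t) p) {0..card A}"
    using card_inj_on_le[OF _ _ \<open>finite A\<close>] by fastforce
  then obtain i j where "i \<noteq> j" "(f ^^ i) p = (f ^^ j) p"
    unfolding inj_on_def by blast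
  then show thesis
    using that by (metis linorder_neqE_nat)
qed

section \<open>Rational functions as Laurent series\<close>

definition fls_of_poly :: "'a::field poly \<Rightarrow> 'a fls" where
  "fls_of_poly p = fps_to_fls (fps_of_poly p)"

lemma fls_of_poly_mult: "fls_of_poly (p * q) = fls_of_poly p * fls_of_poly q"
  by (simp add: fls_of_poly_def fps_of_poly_mult fls_times_fps_to_fls)

lemma fls_of_poly_add: "fls_of_poly (p + q) = fls_of_poly p + fls_of_poly q"
  by (simp add: fls_of_poly_def fps_of_poly_add)

lemma fls_of_poly_eq_0_iff [simp]: "fls_of_poly p = 0 \<longleftrightarrow> p = 0"
  by (simp add: fls_of_poly_def)

lift_definition fls_of_fract :: "'a::field poly fract \<Rightarrow> 'a fls"
  is "\<lambda>(p, q). fls_of_poly p / fls_of_poly q"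
  by (auto simp: frac_eq_eq fls_of_poly_mult[symmetric] mult.commute)

lemma fls_of_fract_Fract: "q \<noteq> 0 \<Longrightarrow> fls_of_fract (Fract p q) = fls_of_poly p / fls_of_poly q"
  by transfer auto

lemma fls_of_fract_0 [simp]: "fls_of_fract 0 = 0"
  by (simp add: Zero_fract_def fls_of_fract_Fract)

lemma fls_of_fract_1 [simp]: "fls_of_fract 1 = 1"
  by (simp add: One_fract_def fls_of_fract_Fract fls_of_poly_def)

lemma fls_of_fract_add: "fls_of_fract (x + y) = fls_of_fract x + fls_of_fract y"
  by (cases x, cases y) (simp add: fls_of_fract_Fract fls_of_poly_mult fls_of_poly_add field_simps)

lemma fls_of_fract_mult: "fls_of_fract (x * y) = fls_of_fract x * fls_of_fract y"
  by (cases x, cases y) (simp add: fls_of_fract_Fract fls_of_poly_mult)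

lemma fls_of_fract_uminus: "fls_of_fract (- x) = - fls_of_fract x"
  using fls_of_fract_add[of x "- x"] by (simp add: eq_neg_iff_add_eq_0 add.commute)

lemma fls_of_fract_sum: "fls_of_fract (\<Sum>t\<in>T. f t) = (\<Sum>t\<in>T. fls_of_fract (f t))"
  by (induction T rule: infinite_finite_induct) (auto simp: fls_of_fract_add)

lemma fls_of_fract_power: "fls_of_fract (x ^ n) = fls_of_fract x ^ n"
  by (induction n) (auto simp: fls_of_fract_mult)

lemma fls_of_fract_of_nat [simp]: "fls_of_fract (of_nat n) = of_nat n"
  by (induction n) (auto simp: fls_of_fract_add)

lemma fls_of_fract_of_int [simp]: "fls_of_fract (of_int k) = of_int k"
  by (cases k rule: int_cases2) (simp_all add: fls_of_fract_uminus)

lemma fls_of_fract_eq_0_iff [simp]: "fls_of_fract x = 0 \<longleftrightarrow> x = 0"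
  by (cases x) (auto simp: fls_of_fract_Fract eq_fract Zero_fract_def)

lemma fls_of_fract_lam: "fls_of_fract lam = fls_X"
  by (simp add: lam_def fls_of_fract_Fract fls_of_poly_def fps_of_poly_fps_X)

lemma lam_power_ne_1:
  assumes "n > 0" shows "lam ^ n \<noteq> 1"
proof
  assume "lam ^ n = 1"
  then have "fls_subdegree (fls_of_fract (lam ^ n)) = 0" by simp
  then show False using assms by (simp add: fls_of_fract_power fls_of_fract_lam)
qed

lemma ratfun_of_nat_eq_0_iff [simp]: "(of_nat n :: ratfun) = 0 \<longleftrightarrow> n = 0"
  by (simp add: of_nat_fract eq_fract Zero_fract_def)

definition ratfun_of_real :: "real \<Rightarrow> ratfun" where
  "ratfun_of_real r = Fract [:complex_of_real r:] 1"

lemma ratfun_of_real_add: "ratfun_of_real (x + y) = ratfun_of_real x + ratfun_of_real y"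
  by (simp add: ratfun_of_real_def)

lemma ratfun_of_real_mult: "ratfun_of_real (x * y) = ratfun_of_real x * ratfun_of_real y"
  by (simp add: ratfun_of_real_def ac_simps)

lemma ratfun_of_real_0 [simp]: "ratfun_of_real 0 = 0"
  by (simp add: ratfun_of_real_def Zero_fract_def)

lemma ratfun_of_real_sum: "ratfun_of_real (\<Sum>t\<in>T. f t) = (\<Sum>t\<in>T. ratfun_of_real (f t))"
  by (induction T rule: infinite_finite_induct) (auto simp: ratfun_of_real_add)

lemma ratfun_of_real_uminus: "ratfun_of_real (- x) = - ratfun_of_real x"
  by (simp add: ratfun_of_real_def)

lemma ratfun_of_real_1: "ratfun_of_real 1 = 1"
  by (simp add: ratfun_of_real_def One_fract_def one_pCons)

lemma ratfun_of_real_of_nat: "ratfun_of_real (of_nat n) = of_nat n"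
  by (induction n) (simp_all add: ratfun_of_real_add ratfun_of_real_1)

lemma ratfun_of_real_of_int [simp]: "ratfun_of_real (of_int k) = of_int k"
  by (cases k rule: int_cases2) (simp_all add: ratfun_of_real_uminus ratfun_of_real_of_nat)

section \<open>Laurent polynomials and the operators D_i\<close>

lemma lsupp_xmon: "lsupp (xmon u) = {u}"
  by (auto simp: lsupp_def xmon_def)

lemma is_laurent_xmon: "is_laurent (xmon u)"
  by (simp add: is_laurent_def lsupp_xmon)

lemma is_laurent_scale: "is_laurent h \<Longrightarrow> is_laurent (\<lambda>v. r * h v)"
  unfolding is_laurent_def lsupp_def by (rule finite_subset[rotated]) auto

lemma is_laurent_add: "is_laurent h \<Longrightarrow> is_laurent g \<Longrightarrow> is_laurent (\<lambda>v. h v + g v)"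
  unfolding is_laurent_def lsupp_def
  by (rule finite_subset[of _ "{u. h u \<noteq> 0} \<union> {u. g u \<noteq> 0}"]) auto

lemma is_laurent_diff: "is_laurent h \<Longrightarrow> is_laurent g \<Longrightarrow> is_laurent (\<lambda>v. h v - g v)"
  unfolding is_laurent_def lsupp_def
  by (rule finite_subset[of _ "{u. h u \<noteq> 0} \<union> {u. g u \<noteq> 0}"]) auto

lemma lsupp_sum_subset: "lsupp (\<lambda>v. \<Sum>t\<in>T. h t v) \<subseteq> (\<Union>t\<in>T. lsupp (h t))"
  unfolding lsupp_def by (auto intro: sum.not_neutral_contains_not_neutral)

lemma is_laurent_sum:
  "finite T \<Longrightarrow> (\<And>t. t \<in> T \<Longrightarrow> is_laurent (h t)) \<Longrightarrow> is_laurent (\<lambda>v. \<Sum>t\<in>T. h t v)"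
  unfolding is_laurent_def by (rule finite_subset[OF lsupp_sum_subset]) auto

lemma laurent_eq_sum_xmon:
  assumes "is_laurent g" shows "g = (\<lambda>v. \<Sum>u\<in>lsupp g. g u * xmon u v)"
proof
  fix v
  have "(\<Sum>u\<in>lsupp g. g u * xmon u v) = (\<Sum>u\<in>lsupp g. if u = v then g v else 0)"
    by (rule sum.cong) (auto simp: xmon_def)
  also have "\<dots> = g v" using assms by (auto simp: is_laurent_def lsupp_def)
  finally show "g v = (\<Sum>u\<in>lsupp g. g u * xmon u v)" by simp
qed

lemma lmult_xmon_right:
  assumes "is_laurent p" shows "lmult p (xmon u) v = p (v - u)"
proof -
  have "lmult p (xmon u) v = (\<Sum>w\<in>lsupp p. if w = v - u then p w else 0)"
    unfolding lmult_def by (rule sum.cong) (auto simp: xmon_def fun_eq_iff algebra_simps)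
  also have "\<dots> = p (v - u)" using assms by (auto simp: is_laurent_def lsupp_def)
  finally show ?thesis .
qed

lemma is_laurent_theta: "is_laurent p \<Longrightarrow> is_laurent (theta i p)"
  unfolding is_laurent_def theta_def lsupp_def by (rule finite_subset[rotated]) auto

lemma is_laurent_flam: "is_laurent (flam m a l)"
  unfolding flam_def by (intro is_laurent_diff is_laurent_sum is_laurent_scale is_laurent_xmon) auto

lemma Dop_scale: "Dop m a l i (\<lambda>v. r * g v) = (\<lambda>v. r * Dop m a l i g v)"
  unfolding Dop_def theta_def lmult_def by (simp add: sum_distrib_left algebra_simps)

lemma Dop_add: "Dop m a l i (\<lambda>v. g v + h v) = (\<lambda>v. Dop m a l i g v + Dop m a l i h v)"
  unfolding Dop_def theta_def lmult_def by (simp add: sum.distrib algebra_simps)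

lemma Dop_sum: "Dop m a l i (\<lambda>v. \<Sum>t\<in>T. h t v) = (\<lambda>v. \<Sum>t\<in>T. Dop m a l i (h t) v)"
  unfolding Dop_def theta_def lmult_def
  by (simp add: sum.distrib sum_distrib_left sum.swap[of _ _ T])

lemma Dop_zero: "Dop m a l i (\<lambda>v. 0) = (\<lambda>v. 0)"
  by (simp add: Dop_def theta_def lmult_def)

lemma Dop_xmon: "Dop m a l i (xmon u) = (\<lambda>v. of_int (u i) * xmon u v
      + (\<Sum>j\<in>{1..m}. (of_nat (l j) * of_int (a j i)) * xmon (u + a j) v)
      - (of_nat (l 0) * lam * of_int (a 0 i)) * xmon (u + a 0) v)"
proof
  fix v
  have xmon_coord: "of_int (w i) * xmon c w = of_int (c i) * (xmon c w :: ratfun)" for c w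
    by (simp add: xmon_def)
  have xmon_shift: "xmon c (v - u) = xmon (u + c) v" for c
    by (auto simp: xmon_def algebra_simps)
  have "lmult (theta i (flam m a l)) (xmon u) v = theta i (flam m a l) (v - u)"
    by (rule lmult_xmon_right[OF is_laurent_theta[OF is_laurent_flam]])
  also have "\<dots> = (\<Sum>j\<in>{1..m}. of_nat (l j) * (of_int ((v - u) i) * xmon (a j) (v - u)))
      - of_nat (l 0) * lam * (of_int ((v - u) i) * xmon (a 0) (v - u))"
    by (simp add: theta_def flam_def algebra_simps sum_distrib_left)
  also have "\<dots> = (\<Sum>j\<in>{1..m}. (of_nat (l j) * of_int (a j i)) * xmon (u + a j) v)
      - (of_nat (l 0) * lam * of_int (a 0 i)) * xmon (u + a 0) v"
    unfolding xmon_coord by (simp add: xmon_shift algebra_simps)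
  finally show "Dop m a l i (xmon u) v = of_int (u i) * xmon u v
      + (\<Sum>j\<in>{1..m}. (of_nat (l j) * of_int (a j i)) * xmon (u + a j) v)
      - (of_nat (l 0) * lam * of_int (a 0 i)) * xmon (u + a 0) v"
    by (simp add: Dop_def theta_def xmon_def)
qed

lemma is_laurent_Dop_xmon: "is_laurent (Dop m a l i (xmon u))"
  unfolding Dop_xmon
  by (intro is_laurent_diff is_laurent_add is_laurent_sum is_laurent_scale is_laurent_xmon) auto

lemma Dop_eq_sum_xmon:
  "is_laurent g \<Longrightarrow> Dop m a l i g = (\<lambda>v. \<Sum>u\<in>lsupp g. g u * Dop m a l i (xmon u) v)"
  by (subst laurent_eq_sum_xmon) (simp_all add: Dop_sum Dop_scale)

lemma is_laurent_Dop: "is_laurent g \<Longrightarrow> is_laurent (Dop m a l i g)"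
  unfolding Dop_eq_sum_xmon
  by (intro is_laurent_sum is_laurent_scale is_laurent_Dop_xmon) (simp add: is_laurent_def)

lemma xmon_in_Sprime: "u \<in> Mset m a \<Longrightarrow> xmon u \<in> Sprime m a"
  by (simp add: Sprime_def is_laurent_xmon lsupp_xmon)

lemma Sprime_add: "g \<in> Sprime m a \<Longrightarrow> h \<in> Sprime m a \<Longrightarrow> (\<lambda>v. g v + h v) \<in> Sprime m a"
  using lsupp_sum_subset[where T = "{True, False}" and h = "\<lambda>t. if t then g else h"]
  unfolding Sprime_def by (auto simp: is_laurent_add)

lemma Sprime_scale: "g \<in> Sprime m a \<Longrightarrow> (\<lambda>v. r * g v) \<in> Sprime m a"
  unfolding Sprime_def by (auto simp: is_laurent_scale lsupp_def)

lemma Dimage_zero: "(\<lambda>v. 0) \<in> Dimage m a l"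
  unfolding Dimage_def
  by (intro CollectI exI[of _ "\<lambda>i v. 0"]) (simp add: Dop_zero Sprime_def is_laurent_def lsupp_def)

lemma Dimage_add:
  assumes "h1 \<in> Dimage m a l" "h2 \<in> Dimage m a l"
  shows "(\<lambda>v. h1 v + h2 v) \<in> Dimage m a l"
proof -
  obtain g1 g2 where "\<forall>i. g1 i \<in> Sprime m a" "h1 = (\<lambda>v. \<Sum>i\<in>UNIV. Dop m a l i (g1 i) v)"
    and "\<forall>i. g2 i \<in> Sprime m a" "h2 = (\<lambda>v. \<Sum>i\<in>UNIV. Dop m a l i (g2 i) v)"
    using assms unfolding Dimage_def by blast
  then show ?thesis unfolding Dimage_def
    by (intro CollectI exI[of _ "\<lambda>i v. g1 i v + g2 i v"]) (simp add: Sprime_add Dop_add sum.distrib)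
qed

lemma Dimage_scale:
  assumes "h \<in> Dimage m a l" shows "(\<lambda>v. r * h v) \<in> Dimage m a l"
proof -
  obtain g where "\<forall>i. g i \<in> Sprime m a" "h = (\<lambda>v. \<Sum>i\<in>UNIV. Dop m a l i (g i) v)"
    using assms unfolding Dimage_def by blast
  then show ?thesis unfolding Dimage_def
    by (intro CollectI exI[of _ "\<lambda>i v. r * g i v"])
      (simp add: Sprime_scale Dop_scale sum_distrib_left)
qed

lemma sum_scaled_Dop_xmon:
  "(\<lambda>v. \<Sum>i\<in>UNIV. r i * Dop m a l i (xmon u) v) = (\<lambda>v.
      (\<Sum>i\<in>UNIV. r i * of_int (u i)) * xmon u v
    + (\<Sum>j\<in>{1..m}. of_nat (l j) * (\<Sum>i\<in>UNIV. r i * of_int (a j i)) * xmon (u + a j) v)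
    - of_nat (l 0) * lam * (\<Sum>i\<in>UNIV. r i * of_int (a 0 i)) * xmon (u + a 0) v)"
  by (simp add: Dop_xmon algebra_simps sum.distrib sum_subtractf sum_distrib_left sum_distrib_right
      sum.swap[of _ UNIV])

definition linear_extension :: "(('n \<Rightarrow> int) \<Rightarrow> complex fls) \<Rightarrow> 'n laurent \<Rightarrow> complex fls" where
  "linear_extension Psi h = (\<Sum>u\<in>lsupp h. fls_of_fract (h u) * Psi u)"

lemma linear_extension_superset:
  "finite U \<Longrightarrow> lsupp h \<subseteq> U \<Longrightarrow> linear_extension Psi h = (\<Sum>u\<in>U. fls_of_fract (h u) * Psi u)"
  unfolding linear_extension_def by (rule sum.mono_neutral_left) (auto simp: lsupp_def)

lemma linear_extension_xmon: "linear_extension Psi (xmon u) = Psi u"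
  unfolding linear_extension_def lsupp_xmon by (simp add: xmon_def)

lemma linear_extension_sum:
  assumes "finite T" and "\<And>t. t \<in> T \<Longrightarrow> is_laurent (h t)"
  shows "linear_extension Psi (\<lambda>v. \<Sum>t\<in>T. h t v) = (\<Sum>t\<in>T. linear_extension Psi (h t))"
proof -
  define U where "U = (\<Union>t\<in>T. lsupp (h t))"
  have U: "finite U" using assms by (auto simp: U_def is_laurent_def)
  have "linear_extension Psi (\<lambda>v. \<Sum>t\<in>T. h t v) = (\<Sum>u\<in>U. \<Sum>t\<in>T. fls_of_fract (h t u) * Psi u)"
    using lsupp_sum_subset[where T = T and h = h]
    by (simp add: linear_extension_superset[OF U] U_def fls_of_fract_sum sum_distrib_right)
  also have "\<dots> = (\<Sum>t\<in>T. linear_extension Psi (h t))"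
    by (subst sum.swap, rule sum.cong[OF refl], rule linear_extension_superset[OF U, symmetric])
      (auto simp: U_def)
  finally show ?thesis .
qed

lemma linear_extension_scale:
  "is_laurent h \<Longrightarrow> linear_extension Psi (\<lambda>v. r * h v) = fls_of_fract r * linear_extension Psi h"
  by (subst linear_extension_superset[of "lsupp h"])
    (auto simp: is_laurent_def lsupp_def linear_extension_def fls_of_fract_mult sum_distrib_left
      mult.assoc)

lemma linear_extension_add:
  assumes "is_laurent h" "is_laurent g"
  shows "linear_extension Psi (\<lambda>v. h v + g v) = linear_extension Psi h + linear_extension Psi g"
  using linear_extension_sum[where T = "{True, False}" and h = "\<lambda>t. if t then h else g"] assms
  by simp

lemma linear_extension_diff:
  assumes "is_laurent h" "is_laurent g"
  shows "linear_extension Psi (\<lambda>v. h v - g v) = linear_extension Psi h - linear_extension Psi g"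
proof -
  have "is_laurent (\<lambda>v. - g v)" using is_laurent_scale[of g "- 1"] assms(2) by simp
  then show ?thesis
    using linear_extension_add[where g = "\<lambda>v. (- 1) * g v"] linear_extension_scale[where r = "- 1"]
      assms
    by (simp add: fls_of_fract_uminus)
qed

lemma linear_extension_lincomb:
  "finite U \<Longrightarrow> linear_extension Psi (lincomb U c) = (\<Sum>u\<in>U. fls_of_fract (c u) * Psi u)"
  unfolding lincomb_def
  by (simp add: linear_extension_sum linear_extension_scale linear_extension_xmon is_laurent_scale
      is_laurent_xmon)

lemma linear_extension_Dop_xmon: "linear_extension Psi (Dop m a l i (xmon u)) =
      of_int (u i) * Psi u
      + (\<Sum>j\<in>{1..m}. of_nat (l j) * of_int (a j i) * Psi (u + a j))
      - of_nat (l 0) * fls_X * of_int (a 0 i) * Psi (u + a 0)"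
  unfolding Dop_xmon
  by (simp add: linear_extension_diff linear_extension_add linear_extension_sum
      linear_extension_scale linear_extension_xmon is_laurent_add is_laurent_sum is_laurent_scale
      is_laurent_xmon fls_of_fract_mult fls_of_fract_lam)

lemma linear_extension_Dimage:
  fixes Psi :: "('n::finite \<Rightarrow> int) \<Rightarrow> complex fls"
  assumes "\<And>u i. u \<in> Mset m a \<Longrightarrow> linear_extension Psi (Dop m a l i (xmon u)) = 0"
    and "h \<in> Dimage m a l"
  shows "linear_extension Psi h = 0"
proof -
  obtain g where g: "\<And>i. g i \<in> Sprime m a" and h: "h = (\<lambda>v. \<Sum>i\<in>UNIV. Dop m a l i (g i) v)"
    using assms(2) unfolding Dimage_def by blast
  have "linear_extension Psi (Dop m a l i (g i)) = 0" for i
  proof -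
    have "is_laurent (g i)" and supp: "lsupp (g i) \<subseteq> Mset m a" using g by (auto simp: Sprime_def)
    moreover from this have "finite (lsupp (g i))" by (simp add: is_laurent_def)
    ultimately have "linear_extension Psi (Dop m a l i (g i))
        = (\<Sum>u\<in>lsupp (g i). fls_of_fract (g i u) * linear_extension Psi (Dop m a l i (xmon u)))"
      by (simp add: Dop_eq_sum_xmon linear_extension_sum linear_extension_scale is_laurent_scale
          is_laurent_Dop_xmon)
    also have "\<dots> = 0" using supp assms(1) by (auto intro!: sum.neutral)
    finally show ?thesis .
  qed
  then show ?thesis
    using g by (simp add: h linear_extension_sum is_laurent_Dop Sprime_def)
qed

section \<open>Coordinates with respect to a_1, ..., a_m\<close>

locale toric_relation =
  fixes m :: nat and a :: "nat \<Rightarrow> ('n::finite) \<Rightarrow> int" and l :: "nat \<Rightarrow> nat"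
  assumes indep: "\<forall>c::nat \<Rightarrow> real.
      (\<forall>i. (\<Sum>j\<in>{1..m}. c j * real_of_int (a j i)) = 0) \<longrightarrow> (\<forall>j\<in>{1..m}. c j = 0)"
    and pos: "\<forall>j\<in>{0..m}. l j > 0"
    and rel: "\<forall>i. int (l 0) * a 0 i = (\<Sum>j\<in>{1..m}. int (l j) * a j i)"
    and l0: "l 0 = (\<Sum>j\<in>{1..m}. l j)"
begin

definition dual :: "nat \<Rightarrow> real^'n" where
  "dual k = (SOME z. \<forall>j\<in>{1..m}. z \<bullet> (\<chi> i. real_of_int (a j i)) = (if j = k then 1 else 0))"

definition coord :: "nat \<Rightarrow> ('n \<Rightarrow> int) \<Rightarrow> real" where
  "coord k u = (\<Sum>i\<in>UNIV. dual k $ i * real_of_int (u i))"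

lemma coord_a: "k \<in> {1..m} \<Longrightarrow> j \<in> {1..m} \<Longrightarrow> coord k (a j) = (if j = k then 1 else 0)"
proof -
  assume k: "k \<in> {1..m}" and j: "j \<in> {1..m}"
  have "\<exists>z. \<forall>j\<in>{1..m}. z \<bullet> (\<chi> i. real_of_int (a j i)) = (if j = k then 1 else 0)"
  proof (rule dual_vector_exists[OF finite_atLeastAtMost k])
    fix c :: "nat \<Rightarrow> real"
    assume "(\<Sum>j\<in>{1..m}. c j *\<^sub>R (\<chi> i. real_of_int (a j i))) = 0"
    then have "\<forall>i. (\<Sum>j\<in>{1..m}. c j * real_of_int (a j i)) = 0"
      by (simp add: vec_eq_iff sum_component)
    then show "\<forall>j\<in>{1..m}. c j = 0" using indep by blast
  qed
  then have "\<forall>j\<in>{1..m}. dual k \<bullet> (\<chi> i. real_of_int (a j i)) = (if j = k then 1 else 0)"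
    unfolding dual_def by (rule someI_ex)
  with j show ?thesis by (simp add: coord_def inner_vec_def)
qed

lemma coord_add: "coord k (u + v) = coord k u + coord k v"
  by (simp add: coord_def algebra_simps sum.distrib)

lemma coord_diff: "coord k (u - v) = coord k u - coord k v"
  by (simp add: coord_def algebra_simps sum_subtractf)

lemma coord_of_nat_mult: "coord k (of_nat t * u) = real t * coord k u"
  by (simp add: coord_def algebra_simps sum_distrib_left)

lemma coord_eq_coeff:
  assumes "\<And>i. real_of_int (u i) = (\<Sum>j\<in>{1..m}. c j * real_of_int (a j i))" and "k \<in> {1..m}"
  shows "coord k u = c k"
proof -
  have "coord k u = (\<Sum>j\<in>{1..m}. c j * (\<Sum>i\<in>UNIV. dual k $ i * real_of_int (a j i)))"
    unfolding coord_def assms(1) by (simp add: sum_distrib_left sum.swap[of _ UNIV] algebra_simps)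
  also have "\<dots> = (\<Sum>j\<in>{1..m}. if j = k then c j else 0)"
    using coord_a[OF assms(2)] by (intro sum.cong) (auto simp: coord_def)
  finally show ?thesis using assms(2) by simp
qed

definition VZ :: "('n \<Rightarrow> int) set" where
  "VZ = {u. \<exists>c. \<forall>i. real_of_int (u i) = (\<Sum>j\<in>{1..m}. c j * real_of_int (a j i))}"

lemma VZ_iff: "u \<in> VZ \<longleftrightarrow> (\<forall>i. real_of_int (u i) = (\<Sum>j\<in>{1..m}. coord j u * real_of_int (a j i)))"
proof
  assume "u \<in> VZ"
  then obtain c where c: "\<And>i. real_of_int (u i) = (\<Sum>j\<in>{1..m}. c j * real_of_int (a j i))"
    by (auto simp: VZ_def)
  then show "\<forall>i. real_of_int (u i) = (\<Sum>j\<in>{1..m}. coord j u * real_of_int (a j i))"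
    by (auto simp: coord_eq_coeff[OF c] intro!: sum.cong)
qed (auto simp: VZ_def)

lemma VZ_add: "u \<in> VZ \<Longrightarrow> v \<in> VZ \<Longrightarrow> u + v \<in> VZ"
  by (simp add: VZ_iff coord_add algebra_simps sum.distrib)

lemma VZ_diff: "u \<in> VZ \<Longrightarrow> v \<in> VZ \<Longrightarrow> u - v \<in> VZ"
  by (simp add: VZ_iff coord_diff algebra_simps sum_subtractf)

lemma VZ_of_nat_mult: "u \<in> VZ \<Longrightarrow> of_nat t * u \<in> VZ"
  by (simp add: VZ_iff coord_of_nat_mult sum_distrib_left mult.assoc)


lemma a0_eq_comb:
  "real_of_int (a 0 i) = (\<Sum>j\<in>{1..m}. (real (l j) / real (l 0)) * real_of_int (a j i))"
proof -
  have "real (l 0) * real_of_int (a 0 i) = (\<Sum>j\<in>{1..m}. real (l j) * real_of_int (a j i))"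
    using arg_cong[OF rel[rule_format, of i], of real_of_int] by simp
  then show ?thesis using pos by (simp add: sum_divide_distrib[symmetric] field_simps)
qed

lemma a0_in_VZ: "a 0 \<in> VZ"
  unfolding VZ_def using a0_eq_comb by (intro CollectI exI allI)

lemma coord_a0: "k \<in> {1..m} \<Longrightarrow> coord k (a 0) = real (l k) / real (l 0)"
  using coord_eq_coeff[OF a0_eq_comb] by simp

lemma Mset_eq: "Mset m a = {u \<in> VZ. \<forall>k\<in>{1..m}. 0 \<le> coord k u}"
  by (auto simp: Mset_def VZ_def coord_eq_coeff)

lemma Bset_eq: "Bset m a = {u \<in> VZ. \<forall>k\<in>{1..m}. 0 \<le> coord k u \<and> coord k u < 1}"
  by (auto simp: Bset_def VZ_def coord_eq_coeff)

abbreviation "M \<equiv> Mset m a"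
abbreviation "B \<equiv> Bset m a"

lemma Bset_subset_Mset: "B \<subseteq> M"
  by (auto simp: Mset_eq Bset_eq)

lemma Mset_add: "u \<in> M \<Longrightarrow> v \<in> M \<Longrightarrow> u + v \<in> M"
  by (simp add: Mset_eq VZ_add coord_add)

lemma Mset_of_nat_mult: "u \<in> M \<Longrightarrow> of_nat t * u \<in> M"
  by (simp add: Mset_eq VZ_of_nat_mult coord_of_nat_mult)

lemma a0_in_Mset: "a 0 \<in> M"
  by (simp add: Mset_eq a0_in_VZ coord_a0)

definition weight :: "('n \<Rightarrow> int) \<Rightarrow> real" where
  "weight u = (\<Sum>k\<in>{1..m}. coord k u)"

lemma weight_add: "weight (u + v) = weight u + weight v"
  by (simp add: weight_def coord_add sum.distrib)

lemma weight_of_nat_mult: "weight (of_nat t * u) = real t * weight u"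
  by (simp add: weight_def coord_of_nat_mult sum_distrib_left)

lemma weight_a0: "weight (a 0) = 1"
proof -
  have "(\<Sum>k\<in>{1..m}. real (l k)) = real (l 0)" using l0 by simp
  then show ?thesis using pos by (simp add: weight_def coord_a0 sum_divide_distrib[symmetric])
qed

lemma finite_Mset_weight_le: "finite {u \<in> M. weight u \<le> W}"
proof -
  define N where "N = \<lceil>max W 0 * (\<Sum>i\<in>UNIV. \<Sum>j\<in>{1..m}. \<bar>real_of_int (a j i)\<bar>)\<rceil>"
  have "\<bar>u i\<bar> \<le> N" if u: "u \<in> M" "weight u \<le> W" for u i
  proof -
    have coord_bound: "0 \<le> coord j u \<and> coord j u \<le> max W 0" if "j \<in> {1..m}" for j
      using u that member_le_sum[of j "{1..m}" "\<lambda>k. coord k u"] by (auto simp: Mset_eq weight_def)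
    have "\<bar>real_of_int (u i)\<bar> \<le> (\<Sum>j\<in>{1..m}. \<bar>coord j u * real_of_int (a j i)\<bar>)"
      using u by (simp add: Mset_eq VZ_iff sum_abs)
    also have "\<dots> \<le> (\<Sum>j\<in>{1..m}. max W 0 * \<bar>real_of_int (a j i)\<bar>)"
      using coord_bound by (intro sum_mono) (simp add: abs_mult mult_right_mono)
    also have "\<dots> \<le> max W 0 * (\<Sum>i\<in>UNIV. \<Sum>j\<in>{1..m}. \<bar>real_of_int (a j i)\<bar>)"
      unfolding sum_distrib_left[symmetric]
      by (intro mult_left_mono member_le_sum[of i UNIV "\<lambda>i. \<Sum>j\<in>{1..m}. \<bar>real_of_int (a j i)\<bar>"])
        (auto intro: sum_nonneg)
    finally show ?thesis unfolding N_def by linarith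
  qed
  then have "{u \<in> M. weight u \<le> W} \<subseteq> Pi\<^sub>E UNIV (\<lambda>_. {-N..N})"
    by (auto simp: PiE_def Pi_def extensional_def abs_le_iff minus_le_iff)
  then show ?thesis by (rule finite_subset) (intro finite_PiE, auto)
qed

lemma finite_Bset: "finite B"
proof (rule finite_subset[OF _ finite_Mset_weight_le[of "real m"]])
  have "weight u \<le> (\<Sum>k\<in>{1..m}. 1)" if "u \<in> B" for u
    unfolding weight_def using that by (intro sum_mono) (auto simp: Bset_eq less_imp_le)
  then show "B \<subseteq> {u \<in> M. weight u \<le> real m}"
    using Bset_subset_Mset by auto
qed

definition lattice_comb :: "(nat \<Rightarrow> nat) \<Rightarrow> 'n \<Rightarrow> int" where
  "lattice_comb n = (\<lambda>i. \<Sum>j\<in>{1..m}. int (n j) * a j i)"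

lemma coord_lattice_comb: "k \<in> {1..m} \<Longrightarrow> coord k (lattice_comb n) = real (n k)"
  by (rule coord_eq_coeff) (simp add: lattice_comb_def)

lemma lattice_comb_in_Mset: "lattice_comb n \<in> M"
proof -
  have "lattice_comb n \<in> VZ"
    unfolding VZ_def lattice_comb_def by (intro CollectI exI[of _ "\<lambda>j. real (n j)"]) simp
  then show ?thesis by (simp add: Mset_eq coord_lattice_comb)
qed

lemma weight_lattice_comb: "weight (lattice_comb n) = real (\<Sum>j\<in>{1..m}. n j)"
  by (simp add: weight_def coord_lattice_comb)

lemma lattice_comb_cong: "(\<And>j. j \<in> {1..m} \<Longrightarrow> n j = n' j) \<Longrightarrow> lattice_comb n = lattice_comb n'"
  by (simp add: lattice_comb_def)

lemma lattice_comb_zero: "(\<And>j. j \<in> {1..m} \<Longrightarrow> n j = 0) \<Longrightarrow> lattice_comb n = 0"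
  by (simp add: lattice_comb_def fun_eq_iff)

lemma lattice_comb_Suc:
  assumes "k \<in> {1..m}" shows "lattice_comb (n(k := Suc (n k))) = lattice_comb n + a k"
proof
  fix i
  have "(\<Sum>j\<in>{1..m}. int ((n(k := Suc (n k))) j) * a j i)
      = (\<Sum>j\<in>{1..m}. int (n j) * a j i + (if j = k then a j i else 0))"
    by (rule sum.cong) (auto simp: algebra_simps)
  then show "lattice_comb (n(k := Suc (n k))) i = (lattice_comb n + a k) i"
    using assms by (simp add: lattice_comb_def sum.distrib)
qed

definition ipart :: "nat \<Rightarrow> ('n \<Rightarrow> int) \<Rightarrow> nat" where
  "ipart k u = nat \<lfloor>coord k u\<rfloor>"

definition fpart :: "('n \<Rightarrow> int) \<Rightarrow> 'n \<Rightarrow> int" where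
  "fpart u = u - lattice_comb (\<lambda>j. ipart j u)"

lemma fpart_add_lattice_comb: "fpart u + lattice_comb (\<lambda>j. ipart j u) = u"
  by (simp add: fpart_def)

lemma coord_fpart: "k \<in> {1..m} \<Longrightarrow> coord k (fpart u) = coord k u - real (ipart k u)"
  by (simp add: fpart_def coord_diff coord_lattice_comb)

lemma real_ipart: "0 \<le> coord k u \<Longrightarrow> real (ipart k u) = of_int \<lfloor>coord k u\<rfloor>"
  by (simp add: ipart_def)

lemma fpart_in_Bset:
  assumes "u \<in> M" shows "fpart u \<in> B"
proof -
  have "fpart u \<in> VZ"
    using assms lattice_comb_in_Mset by (simp add: fpart_def Mset_eq VZ_diff)
  moreover have "0 \<le> coord k (fpart u) \<and> coord k (fpart u) < 1" if "k \<in> {1..m}" for k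
    using assms that real_ipart[of k u] of_int_floor_le[of "coord k u"]
    by (simp add: coord_fpart Mset_eq, use real_of_int_floor_add_one_gt[of "coord k u"] in linarith)
  ultimately show ?thesis by (simp add: Bset_eq)
qed

lemma ipart_Bset: "b \<in> B \<Longrightarrow> k \<in> {1..m} \<Longrightarrow> ipart k b = 0"
  by (simp add: ipart_def Bset_eq floor_eq_iff)

lemma fpart_Bset: "b \<in> B \<Longrightarrow> fpart b = b"
  using lattice_comb_zero[of "\<lambda>j. ipart j b"] ipart_Bset by (simp add: fpart_def)

lemma Bset_if_ipart_eq_0: "u \<in> M \<Longrightarrow> (\<And>k. k \<in> {1..m} \<Longrightarrow> ipart k u = 0) \<Longrightarrow> u \<in> B"
  by (metis diff_zero fpart_def fpart_in_Bset lattice_comb_zero)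

lemma ipart_add_a:
  assumes "u \<in> M" and "k \<in> {1..m}" and "j \<in> {1..m}"
  shows "ipart j (u + a k) = (if j = k then Suc (ipart j u) else ipart j u)"
proof -
  have "0 \<le> coord j u" using assms by (simp add: Mset_eq)
  then show ?thesis using assms(2,3) by (auto simp: ipart_def coord_add coord_a nat_add_distrib)
qed

lemma fpart_add_a:
  assumes "u \<in> M" and "k \<in> {1..m}"
  shows "fpart (u + a k) = fpart u"
proof -
  have "lattice_comb (\<lambda>j. ipart j (u + a k)) = lattice_comb ((\<lambda>j. ipart j u)(k := Suc (ipart k u)))"
    using assms by (intro lattice_comb_cong) (simp add: ipart_add_a)
  then show ?thesis by (simp add: fpart_def lattice_comb_Suc[OF assms(2), of "\<lambda>j. ipart j u"])
qed

end

section \<open>Linear independence\<close>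

context
begin

unbundle Formal_Power_Series.fps_syntax and Formal_Laurent_Series.fps_syntax

lemma fls_times_fps_to_fls_nth_lowest:
  fixes d :: "'a::comm_ring_1 fls"
  assumes "\<And>i. i < v \<Longrightarrow> d $$ i = 0"
  shows "(d * fps_to_fls f) $$ v = d $$ v * f $ 0"
proof -
  have regular: "fls_shift v d = fps_to_fls (fls_regpart (fls_shift v d))"
  proof (cases "fls_shift v d = 0")
    case False
    then have "0 \<le> fls_subdegree (fls_shift v d)"
      using assms by (intro fls_subdegree_geI) simp_all
    then show ?thesis by (simp add: fls_regpart_to_fls_trivial)
  qed simp
  have "(d * fps_to_fls f) $$ v = (fls_shift v d * fps_to_fls f) $$ 0"
    by (simp add: fls_shifted_times_simps)
  also have "\<dots> = fps_to_fls (fls_regpart (fls_shift v d) * f) $$ 0"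
    by (subst regular) (simp only: fls_times_fps_to_fls)
  also have "\<dots> = d $$ v * f $ 0"
    by simp
  finally show ?thesis .
qed

lemma fps_to_fls_sum: "fps_to_fls (\<Sum>t\<in>T. f t) = (\<Sum>t\<in>T. fps_to_fls (f t))"
  by (induction T rule: infinite_finite_induct) (auto simp: fps_to_fls_plus)

end

context toric_relation
begin

unbundle Formal_Power_Series.fps_syntax and Formal_Laurent_Series.fps_syntax

(* G_b of the independence argument: (-1/l_j)^n pochhammer(c_j(b), n) solves
   G(u + a_j) = -(c_j(u) / l_j) G(u) along the j-th direction. *)
definition base_coeff :: "('n \<Rightarrow> int) \<Rightarrow> ('n \<Rightarrow> int) \<Rightarrow> real" where
  "base_coeff b u = (if fpart u = b
     then (\<Prod>j\<in>{1..m}. (- 1 / real (l j)) ^ ipart j u * pochhammer (coord j b) (ipart j u))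
     else 0)"

lemma base_coeff_add_a:
  assumes u: "u \<in> M" and k: "k \<in> {1..m}"
  shows "base_coeff b (u + a k) = - (coord k u / real (l k)) * base_coeff b u"
proof (cases "fpart u = b")
  case True
  define F where "F j t = (- 1 / real (l j)) ^ t * pochhammer (coord j b) t" for j t
  have "coord k b + real (ipart k u) = coord k u"
    using coord_fpart[OF k, of u] True by simp
  then have "F k (Suc (ipart k u)) = - (coord k u / real (l k)) * F k (ipart k u)"
    by (simp add: F_def pochhammer_Suc field_simps)
  then have "(\<Prod>j\<in>{1..m}. F j (ipart j (u + a k)))
      = (\<Prod>j\<in>{1..m}. (if j = k then - (coord k u / real (l k)) else 1) * F j (ipart j u))"
    using u k by (intro prod.cong) (auto simp: ipart_add_a)
  also have "\<dots> = - (coord k u / real (l k)) * (\<Prod>j\<in>{1..m}. F j (ipart j u))"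
    using k by (simp add: prod.distrib)
  finally show ?thesis
    using True u k by (simp add: base_coeff_def fpart_add_a F_def)
qed (simp add: base_coeff_def fpart_add_a[OF u k])

lemma base_coeff_Bset: "b' \<in> B \<Longrightarrow> base_coeff b b' = (if b' = b then 1 else 0)"
  by (cases "b' = b") (simp_all add: base_coeff_def fpart_Bset ipart_Bset)

definition psi_coeff :: "('n \<Rightarrow> int) \<Rightarrow> ('n \<Rightarrow> int) \<Rightarrow> nat \<Rightarrow> real" where
  "psi_coeff b u t = (- real (l 0)) ^ t / fact t * base_coeff b (u + of_nat t * a 0)"

lemma psi_coeff_rec:
  assumes u: "u \<in> M" and k: "k \<in> {1..m}"
  shows "coord k u * psi_coeff b u t + real (l k) * psi_coeff b (u + a k) t
    = (if t = 0 then 0 else real (l k) * psi_coeff b (u + a 0) (t - 1))"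
proof -
  define v where "v = u + of_nat t * a 0"
  define c where "c = (- real (l 0)) ^ t / fact t * base_coeff b v"
  have "v \<in> M" using u by (simp add: v_def Mset_add Mset_of_nat_mult a0_in_Mset)
  have "real (l k) \<noteq> 0" "real (l 0) \<noteq> 0" using pos k by auto
  have "psi_coeff b (u + a k) t = - (coord k v / real (l k)) * c"
    using base_coeff_add_a[OF \<open>v \<in> M\<close> k] by (simp add: psi_coeff_def c_def v_def ac_simps)
  then have "coord k u * psi_coeff b u t + real (l k) * psi_coeff b (u + a k) t
      = c * (coord k u - coord k v)"
    using \<open>real (l k) \<noteq> 0\<close> by (simp add: psi_coeff_def c_def v_def field_simps)
  also have "coord k u - coord k v = - (real t * real (l k) / real (l 0))"
    using k by (simp add: v_def coord_add coord_of_nat_mult coord_a0)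
  finally have lhs: "coord k u * psi_coeff b u t + real (l k) * psi_coeff b (u + a k) t
      = c * - (real t * real (l k) / real (l 0))" .
  show ?thesis
  proof (cases t)
    case (Suc s)
    have rhs: "psi_coeff b (u + a 0) (t - 1) = (- real (l 0)) ^ s / fact s * base_coeff b v"
      by (simp add: psi_coeff_def v_def Suc algebra_simps)
    show ?thesis
      unfolding lhs rhs using \<open>real (l 0) \<noteq> 0\<close>
      by (simp add: Suc c_def fact_Suc field_simps del: of_nat_Suc)
  qed (use lhs in simp)
qed

lemma psi_coeff_Dop:
  assumes u: "u \<in> M"
  shows "real_of_int (u i) * psi_coeff b u t
      + (\<Sum>j\<in>{1..m}. real (l j) * real_of_int (a j i) * psi_coeff b (u + a j) t)
    = (if t = 0 then 0 else real (l 0) * real_of_int (a 0 i) * psi_coeff b (u + a 0) (t - 1))"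
proof -
  have "real_of_int (u i) = (\<Sum>k\<in>{1..m}. coord k u * real_of_int (a k i))"
    using u by (simp add: Mset_eq VZ_iff)
  then have "real_of_int (u i) * psi_coeff b u t
      + (\<Sum>j\<in>{1..m}. real (l j) * real_of_int (a j i) * psi_coeff b (u + a j) t)
    = (\<Sum>k\<in>{1..m}. real_of_int (a k i)
        * (coord k u * psi_coeff b u t + real (l k) * psi_coeff b (u + a k) t))"
    by (simp add: sum_distrib_left sum_distrib_right sum.distrib algebra_simps)
  also have "\<dots> = (\<Sum>k\<in>{1..m}. real_of_int (a k i)
        * (if t = 0 then 0 else real (l k) * psi_coeff b (u + a 0) (t - 1)))"
    using u by (intro sum.cong) (simp_all add: psi_coeff_rec)
  also have "\<dots>
      = (if t = 0 then 0 else real (l 0) * real_of_int (a 0 i) * psi_coeff b (u + a 0) (t - 1))"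
    using arg_cong[OF rel[rule_format, of i], of real_of_int]
    by (simp add: sum_distrib_left sum_distrib_right algebra_simps)
  finally show ?thesis .
qed

definition psi :: "('n \<Rightarrow> int) \<Rightarrow> ('n \<Rightarrow> int) \<Rightarrow> complex fps" where
  "psi b u = Abs_fps (\<lambda>t. complex_of_real (psi_coeff b u t))"

lemma psi_Dop:
  assumes "u \<in> M"
  shows "of_int (u i) * psi b u + (\<Sum>j\<in>{1..m}. of_nat (l j) * of_int (a j i) * psi b (u + a j))
    = of_nat (l 0) * of_int (a 0 i) * fps_X * psi b (u + a 0)"
proof (rule fps_ext)
  fix t
  show "(of_int (u i) * psi b u + (\<Sum>j\<in>{1..m}. of_nat (l j) * of_int (a j i) * psi b (u + a j))) $ t
      = (of_nat (l 0) * of_int (a 0 i) * fps_X * psi b (u + a 0)) $ t"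
    using arg_cong[OF psi_coeff_Dop[OF assms, of i b t], of complex_of_real]
    by (simp add: psi_def fps_sum_nth mult.assoc)
qed

lemma linear_extension_psi_Dop:
  assumes "u \<in> M"
  shows "linear_extension (\<lambda>u. fps_to_fls (psi b u)) (Dop m a l i (xmon u)) = 0"
  using arg_cong[OF psi_Dop[OF assms, of i b], of fps_to_fls]
  by (simp add: linear_extension_Dop_xmon fps_to_fls_sum fps_to_fls_plus fls_times_fps_to_fls
      fps_to_fls_of_nat mult.commute mult.left_commute)

lemma psi_Bset_nth_0: "b' \<in> B \<Longrightarrow> psi b b' $ 0 = (if b' = b then 1 else 0)"
  by (simp add: psi_def psi_coeff_def base_coeff_Bset)

lemma lincomb_Bset_in_Dimage_imp_zero:
  assumes "lincomb B c \<in> Dimage m a l"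
  shows "\<forall>b\<in>B. c b = 0"
proof (rule ccontr)
  assume "\<not> (\<forall>b\<in>B. c b = 0)"
  define d where "d b = fls_of_fract (c b)" for b
  define D where "D = {b \<in> B. d b \<noteq> 0}"
  have "finite D" "D \<noteq> {}"
    using finite_Bset \<open>\<not> (\<forall>b\<in>B. c b = 0)\<close> by (auto simp: D_def d_def)
  then obtain b0 where "b0 \<in> D" and b0_min: "\<And>b. b \<in> D \<Longrightarrow> fls_subdegree (d b0) \<le> fls_subdegree (d b)"
    using ex_is_arg_min_if_finite[of D "\<lambda>b. fls_subdegree (d b)"]
    by (auto simp: is_arg_min_linorder)
  define v where "v = fls_subdegree (d b0)"
  have low: "d b $$ i = 0" if "b \<in> B" "i < v" for b i
    using b0_min[of b] that by (cases "d b = 0") (auto simp: D_def v_def)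
  have "(\<Sum>b\<in>B. d b * fps_to_fls (psi b0 b)) = 0"
    using linear_extension_Dimage[OF linear_extension_psi_Dop assms] finite_Bset
    by (simp add: linear_extension_lincomb d_def)
  then have "0 = (\<Sum>b\<in>B. d b * fps_to_fls (psi b0 b)) $$ v" by simp
  also have "\<dots> = (\<Sum>b\<in>B. d b $$ v * (if b = b0 then 1 else 0))"
    using low by (simp add: fls_nth_sum fls_times_fps_to_fls_nth_lowest psi_Bset_nth_0)
  also have "\<dots> = d b0 $$ v"
    using \<open>b0 \<in> D\<close> finite_Bset by (simp add: D_def if_distrib cong: if_cong)
  finally show False
    using \<open>b0 \<in> D\<close> by (simp add: D_def v_def nth_fls_subdegree_zero_iff)
qed

end

section \<open>Spanning\<close>

context toric_relation
begin

definition spanned :: "'n laurent \<Rightarrow> bool" where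
  "spanned h \<longleftrightarrow> (\<exists>c. (\<lambda>v. h v - lincomb B c v) \<in> Dimage m a l)"

lemma spanned_add:
  assumes "spanned h1" "spanned h2" shows "spanned (\<lambda>v. h1 v + h2 v)"
proof -
  obtain c1 c2 where "(\<lambda>v. h1 v - lincomb B c1 v) \<in> Dimage m a l"
    and "(\<lambda>v. h2 v - lincomb B c2 v) \<in> Dimage m a l"
    using assms by (auto simp: spanned_def)
  from Dimage_add[OF this] show ?thesis
    unfolding spanned_def
    by (intro exI[of _ "\<lambda>b. c1 b + c2 b"]) (simp add: lincomb_def algebra_simps sum.distrib)
qed

lemma spanned_scale:
  assumes "spanned h" shows "spanned (\<lambda>v. r * h v)"
proof -
  obtain c where "(\<lambda>v. h v - lincomb B c v) \<in> Dimage m a l"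
    using assms by (auto simp: spanned_def)
  from Dimage_scale[OF this, of r] show ?thesis
    unfolding spanned_def
    by (intro exI[of _ "\<lambda>b. r * c b"]) (simp add: lincomb_def algebra_simps sum_distrib_left)
qed

lemma spanned_diff: "spanned h1 \<Longrightarrow> spanned h2 \<Longrightarrow> spanned (\<lambda>v. h1 v - h2 v)"
  using spanned_add[of h1 "\<lambda>v. (- 1) * h2 v"] spanned_scale[of h2 "- 1"] by simp

lemma spanned_Dimage: "h \<in> Dimage m a l \<Longrightarrow> spanned h"
  unfolding spanned_def by (intro exI[of _ "\<lambda>b. 0"]) (simp add: lincomb_def)

lemma spanned_zero: "spanned (\<lambda>v. 0)"
  by (rule spanned_Dimage[OF Dimage_zero])

lemma spanned_sum:
  "finite T \<Longrightarrow> (\<And>t. t \<in> T \<Longrightarrow> spanned (h t)) \<Longrightarrow> spanned (\<lambda>v. \<Sum>t\<in>T. h t v)"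
  by (induction T rule: finite_induct) (simp_all add: spanned_zero spanned_add)

lemma spanned_xmon_Bset:
  assumes "b \<in> B" shows "spanned (xmon b)"
proof -
  have "lincomb B (\<lambda>b'. if b' = b then 1 else 0) v = (\<Sum>b'\<in>B. if b' = b then xmon b v else 0)" for v
    unfolding lincomb_def by (rule sum.cong) auto
  then have "lincomb B (\<lambda>b'. if b' = b then 1 else 0) = xmon b"
    using assms finite_Bset by (intro ext) simp
  then show ?thesis
    unfolding spanned_def
    by (intro exI[of _ "\<lambda>b'. if b' = b then 1 else 0"]) (simp add: Dimage_zero)
qed

definition cong_mod :: "'n laurent \<Rightarrow> 'n laurent \<Rightarrow> bool" where
  "cong_mod h1 h2 \<longleftrightarrow> spanned (\<lambda>v. h1 v - h2 v)"

lemma cong_mod_refl: "cong_mod h h"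
  by (simp add: cong_mod_def spanned_zero)

lemma cong_mod_trans: "cong_mod h1 h2 \<Longrightarrow> cong_mod h2 h3 \<Longrightarrow> cong_mod h1 h3"
  unfolding cong_mod_def using spanned_add[of "\<lambda>v. h1 v - h2 v" "\<lambda>v. h2 v - h3 v"] by simp

lemma cong_mod_scale: "cong_mod h1 h2 \<Longrightarrow> cong_mod (\<lambda>v. r * h1 v) (\<lambda>v. r * h2 v)"
  unfolding cong_mod_def using spanned_scale[of "\<lambda>v. h1 v - h2 v" r] by (simp add: algebra_simps)

lemma spanned_if_cong_mod: "cong_mod h1 h2 \<Longrightarrow> spanned h2 \<Longrightarrow> spanned h1"
  unfolding cong_mod_def using spanned_add[of "\<lambda>v. h1 v - h2 v" h2] by simp

lemma Dimage_shift_relation: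
  assumes u: "u \<in> M" and k: "k \<in> {1..m}"
  shows "(\<lambda>v. ratfun_of_real (coord k u) * xmon u v + of_nat (l k) * xmon (u + a k) v
      - of_nat (l k) * lam * xmon (u + a 0) v) \<in> Dimage m a l"
proof -
  define r where "r i = ratfun_of_real (dual k $ i)" for i
  have coeff: "(\<Sum>i\<in>UNIV. r i * of_int (w i)) = ratfun_of_real (coord k w)" for w
    by (simp add: r_def coord_def ratfun_of_real_sum ratfun_of_real_mult)
  have "(\<lambda>v. \<Sum>i\<in>UNIV. Dop m a l i (\<lambda>v. r i * xmon u v) v)
      = (\<lambda>v. ratfun_of_real (coord k u) * xmon u v
      + (\<Sum>j\<in>{1..m}. (if j = k then of_nat (l k) * xmon (u + a k) v else 0))
      - of_nat (l 0) * lam * ratfun_of_real (real (l k) / real (l 0)) * xmon (u + a 0) v)"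
    unfolding Dop_scale sum_scaled_Dop_xmon coeff using k
    by (intro ext arg_cong2[where f = "(-)"] arg_cong2[where f = "(+)"] refl sum.cong)
      (auto simp: coord_a coord_a0 ratfun_of_real_1)
  also have "\<dots> = (\<lambda>v. ratfun_of_real (coord k u) * xmon u v + of_nat (l k) * xmon (u + a k) v
      - of_nat (l k) * lam * xmon (u + a 0) v)"
  proof -
    have "of_nat (l 0) * ratfun_of_real (real (l k) / real (l 0)) = of_nat (l k)"
      using pos by (simp flip: ratfun_of_real_of_nat ratfun_of_real_mult)
    then show ?thesis using k by (simp add: algebra_simps)
  qed
  finally show ?thesis
    unfolding Dimage_def using u
    by (auto intro!: exI[of _ "\<lambda>i v. r i * xmon u v"] Sprime_scale xmon_in_Sprime)
qed

lemma cong_mod_step: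
  assumes u: "u \<in> M" and k: "k \<in> {1..m}" and "spanned (xmon u)"
  shows "cong_mod (xmon (u + a k)) (\<lambda>v. lam * xmon (u + a 0) v)"
proof -
  define E where "E v = ratfun_of_real (coord k u) * xmon u v + of_nat (l k) * xmon (u + a k) v
      - of_nat (l k) * lam * xmon (u + a 0) v" for v
  have "spanned E"
    using spanned_Dimage[OF Dimage_shift_relation[OF u k]] by (simp add: E_def[abs_def])
  have "(of_nat (l k) :: ratfun) \<noteq> 0"
    using pos k by auto
  then have "(\<lambda>v. xmon (u + a k) v - lam * xmon (u + a 0) v)
      = (\<lambda>v. inverse (of_nat (l k)) * E v
          - (inverse (of_nat (l k)) * ratfun_of_real (coord k u)) * xmon u v)"
    by (simp add: E_def fun_eq_iff field_simps)
  moreover have "spanned \<dots>"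
    using \<open>spanned E\<close> \<open>spanned (xmon u)\<close> by (intro spanned_diff spanned_scale)
  ultimately show ?thesis by (simp add: cong_mod_def)
qed

lemma cong_mod_lattice_comb:
  assumes lower: "\<And>q. q \<in> M \<Longrightarrow> weight q < W \<Longrightarrow> spanned (xmon q)"
  shows "p \<in> M \<Longrightarrow> weight p + real s = W \<Longrightarrow> (\<Sum>j\<in>{1..m}. n j) = s \<Longrightarrow>
    cong_mod (xmon (p + lattice_comb n)) (\<lambda>v. lam ^ s * xmon (p + of_nat s * a 0) v)"
proof (induction s arbitrary: p n)
  case 0
  then have "lattice_comb n = 0" by (intro lattice_comb_zero) simp
  then show ?case by (simp add: cong_mod_refl)
next
  case (Suc s)
  obtain k where k: "k \<in> {1..m}" "n k > 0"
    using Suc.prems(3) sum.neutral[of "{1..m}" n] by (metis Zero_not_Suc gr0I)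
  define n' where "n' = n(k := n k - 1)"
  have n: "n = n'(k := Suc (n' k))" using k by (auto simp: n'_def)
  have "(\<Sum>j\<in>{1..m}. n j) = Suc (\<Sum>j\<in>{1..m}. n' j)"
    using k by (simp add: n sum.remove)
  then have sum_n': "(\<Sum>j\<in>{1..m}. n' j) = s" using Suc.prems(3) by simp
  define q where "q = p + lattice_comb n'"
  have "q \<in> M" using Suc.prems(1) by (simp add: q_def Mset_add lattice_comb_in_Mset)
  moreover have "weight q < W"
    using Suc.prems(2) sum_n' by (simp add: q_def weight_add weight_lattice_comb)
  ultimately have step: "cong_mod (xmon (q + a k)) (\<lambda>v. lam * xmon (q + a 0) v)"
    using k(1) lower by (intro cong_mod_step)
  have "p + a 0 \<in> M" using Suc.prems(1) by (simp add: Mset_add a0_in_Mset)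
  moreover have "weight (p + a 0) + real s = W"
    using Suc.prems(2) by (simp add: weight_add weight_a0)
  ultimately have "cong_mod (xmon (p + a 0 + lattice_comb n'))
      (\<lambda>v. lam ^ s * xmon (p + a 0 + of_nat s * a 0) v)"
    using Suc.IH sum_n' by blast
  then have "cong_mod (\<lambda>v. lam * xmon (q + a 0) v)
      (\<lambda>v. lam ^ Suc s * xmon (p + of_nat (Suc s) * a 0) v)"
    using cong_mod_scale[where r = lam] by (simp add: q_def algebra_simps)
  moreover have "p + lattice_comb n = q + a k"
    using k(1) by (simp add: n q_def lattice_comb_Suc add.assoc)
  ultimately show ?case using step cong_mod_trans by metis
qed

definition ipart_sum :: "('n \<Rightarrow> int) \<Rightarrow> nat" where
  "ipart_sum p = (\<Sum>k\<in>{1..m}. ipart k p)"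

definition shift_map :: "('n \<Rightarrow> int) \<Rightarrow> 'n \<Rightarrow> int" where
  "shift_map p = fpart p + of_nat (ipart_sum p) * a 0"

lemma weight_eq_fpart_ipart_sum: "weight p = weight (fpart p) + real (ipart_sum p)"
  using arg_cong[OF fpart_add_lattice_comb[of p], of weight]
  by (simp add: weight_add weight_lattice_comb ipart_sum_def)

lemma shift_map_in_Mset: "p \<in> M \<Longrightarrow> shift_map p \<in> M"
  unfolding shift_map_def
  using fpart_in_Bset Bset_subset_Mset by (blast intro: Mset_add Mset_of_nat_mult a0_in_Mset)

lemma weight_shift_map: "weight (shift_map p) = weight p"
  by (simp add: shift_map_def weight_add weight_of_nat_mult weight_a0
      weight_eq_fpart_ipart_sum[of p])

lemma funpow_shift_map: "p \<in> M \<Longrightarrow> (shift_map ^^ t) p \<in> M \<and> weight ((shift_map ^^ t) p) = weight p"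
  by (induction t) (auto simp: shift_map_in_Mset weight_shift_map)

lemma cong_mod_shift_map_iter:
  assumes lower: "\<And>q. q \<in> M \<Longrightarrow> weight q < weight p \<Longrightarrow> spanned (xmon q)" and "p \<in> M"
  shows "cong_mod (xmon p)
    (\<lambda>v. lam ^ (\<Sum>r<t. ipart_sum ((shift_map ^^ r) p)) * xmon ((shift_map ^^ t) p) v)"
proof (induction t)
  case (Suc t)
  define q where "q = (shift_map ^^ t) p"
  have "q \<in> M" "weight q = weight p" using funpow_shift_map[OF \<open>p \<in> M\<close>] by (auto simp: q_def)
  then have "cong_mod (xmon (fpart q + lattice_comb (\<lambda>j. ipart j q)))
      (\<lambda>v. lam ^ ipart_sum q * xmon (fpart q + of_nat (ipart_sum q) * a 0) v)"
    using fpart_in_Bset Bset_subset_Mset lower weight_eq_fpart_ipart_sum[of q]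
    by (intro cong_mod_lattice_comb[where W = "weight p"]) (auto simp: ipart_sum_def)
  then have "cong_mod (\<lambda>v. lam ^ (\<Sum>r<t. ipart_sum ((shift_map ^^ r) p)) * xmon q v)
      (\<lambda>v. lam ^ (\<Sum>r<Suc t. ipart_sum ((shift_map ^^ r) p)) * xmon ((shift_map ^^ Suc t) p) v)"
    using cong_mod_scale
    by (simp add: fpart_add_lattice_comb q_def shift_map_def power_add mult.assoc)
  with Suc.IH show ?case unfolding q_def by (rule cong_mod_trans)
qed (simp add: cong_mod_refl)

lemma spanned_xmon_periodic:
  assumes lower: "\<And>q'. q' \<in> M \<Longrightarrow> weight q' < weight q \<Longrightarrow> spanned (xmon q')"
    and "q \<in> M" and "(shift_map ^^ d) q = q" and "d > 0"
  shows "spanned (xmon q)"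
proof -
  define S where "S = (\<Sum>r<d. ipart_sum ((shift_map ^^ r) q))"
  have cycle: "cong_mod (xmon q) (\<lambda>v. lam ^ S * xmon q v)"
    using cong_mod_shift_map_iter[OF lower \<open>q \<in> M\<close>, of d] assms(3) by (simp add: S_def)
  show ?thesis
  proof (cases "S = 0")
    case True
    then have "ipart_sum q = 0"
      using \<open>d > 0\<close> by (simp add: S_def) (metis funpow_0 lessThan_iff)
    then have "q \<in> B" using \<open>q \<in> M\<close> by (intro Bset_if_ipart_eq_0) (auto simp: ipart_sum_def)
    then show ?thesis by (rule spanned_xmon_Bset)
  next
    case False
    then have "1 - lam ^ S \<noteq> 0" using lam_power_ne_1 by simp
    have "spanned (\<lambda>v. inverse (1 - lam ^ S) * (xmon q v - lam ^ S * xmon q v))"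
      using cycle by (intro spanned_scale) (simp add: cong_mod_def)
    moreover have "(\<lambda>v. inverse (1 - lam ^ S) * (xmon q v - lam ^ S * xmon q v)) = xmon q"
      using \<open>1 - lam ^ S \<noteq> 0\<close> by (simp add: fun_eq_iff field_simps)
    ultimately show ?thesis by simp
  qed
qed

lemma Mset_weight_induct [consumes 1, case_names step]:
  assumes "u \<in> M" and step: "\<And>u. u \<in> M \<Longrightarrow> (\<And>q. q \<in> M \<Longrightarrow> weight q < weight u \<Longrightarrow> P q) \<Longrightarrow> P u"
  shows "P u"
  using assms(1)
proof (induction "card {q \<in> M. weight q < weight u}" arbitrary: u rule: less_induct)
  case less
  show ?case
  proof (rule step[OF less.prems])
    fix q assume q: "q \<in> M" "weight q < weight u"
    have "finite {r \<in> M. weight r < weight u}"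
      by (rule finite_subset[OF _ finite_Mset_weight_le[of "weight u"]]) auto
    moreover have "{r \<in> M. weight r < weight q} \<subset> {r \<in> M. weight r < weight u}"
      using q by auto
    ultimately have "card {r \<in> M. weight r < weight q} < card {r \<in> M. weight r < weight u}"
      by (rule psubset_card_mono)
    then show "P q" using q(1) by (rule less.hyps)
  qed
qed

lemma spanned_xmon: "u \<in> M \<Longrightarrow> spanned (xmon u)"
proof (induction rule: Mset_weight_induct)
  case (step u)
  define A where "A = {q \<in> M. weight q = weight u}"
  have "finite A"
    unfolding A_def by (rule finite_subset[OF _ finite_Mset_weight_le[of "weight u"]]) auto
  moreover have "shift_map ` A \<subseteq> A" by (auto simp: A_def shift_map_in_Mset weight_shift_map)
  moreover have "u \<in> A" using step by (simp add: A_def)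
  ultimately obtain i j where "i < j" and repeat: "(shift_map ^^ i) u = (shift_map ^^ j) u"
    by (rule funpow_repeats_in_finite_set)
  define q where "q = (shift_map ^^ i) u"
  have q: "q \<in> M" "weight q = weight u" using funpow_shift_map[OF step(1)] by (auto simp: q_def)
  have "(shift_map ^^ (j - i)) q = (shift_map ^^ (j - i + i)) u"
    by (simp only: q_def funpow_add o_apply)
  also have "\<dots> = q" using \<open>i < j\<close> repeat by (simp add: q_def)
  finally have period: "(shift_map ^^ (j - i)) q = q" .
  have "spanned (xmon q)"
  proof (rule spanned_xmon_periodic[OF _ q(1) period])
    show "j - i > 0" using \<open>i < j\<close> by simp
  qed (use step(2) q(2) in simp)
  then have "spanned (\<lambda>v. lam ^ (\<Sum>r<i. ipart_sum ((shift_map ^^ r) u)) * xmon q v)"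
    by (rule spanned_scale)
  with cong_mod_shift_map_iter[OF step(2) step(1), of i] show ?case
    unfolding q_def by (rule spanned_if_cong_mod)
qed

lemma spanned_Sprime:
  assumes "g \<in> Sprime m a" shows "spanned g"
proof -
  have "is_laurent g" "lsupp g \<subseteq> M" using assms by (auto simp: Sprime_def)
  then have "spanned (\<lambda>v. \<Sum>u\<in>lsupp g. g u * xmon u v)"
    by (intro spanned_sum spanned_scale spanned_xmon) (auto simp: is_laurent_def)
  then show ?thesis by (subst laurent_eq_sum_xmon[OF \<open>is_laurent g\<close>])
qed

end

theorem proposition5p34:
  fixes m :: nat and a :: "nat \<Rightarrow> ('n::finite) \<Rightarrow> int" and l :: "nat \<Rightarrow> nat"
  assumes indep: "\<forall>c::nat \<Rightarrow> real.
      (\<forall>i. (\<Sum>j\<in>{1..m}. c j * real_of_int (a j i)) = 0) \<longrightarrow> (\<forall>j\<in>{1..m}. c j = 0)"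
    and pos: "\<forall>j\<in>{0..m}. l j > 0"
    and gcd1: "Gcd (l ` {0..m}) = 1"
    and rel: "\<forall>i. int (l 0) * a 0 i = (\<Sum>j\<in>{1..m}. int (l j) * a j i)"
    and l0: "l 0 = (\<Sum>j\<in>{1..m}. l j)"
  shows "is_quotient_basis (Sprime m a) (Dimage m a l) (Bset m a)"
proof -
  interpret toric_relation m a l
    using indep pos rel l0 by unfold_locales
  show ?thesis
    unfolding is_quotient_basis_def
  proof (intro conjI)
    show "\<forall>b\<in>B. xmon b \<in> Sprime m a"
      using Bset_subset_Mset xmon_in_Sprime by blast
    show "\<forall>g\<in>Sprime m a. \<exists>c. (\<lambda>v. g v - lincomb B c v) \<in> Dimage m a l"
      using spanned_Sprime unfolding spanned_def by blast
  qed (use finite_Bset lincomb_Bset_in_Dimage_imp_zero in auto)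
qed

end
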